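(* For every positive integer $n$ with $n\ne2,6$, there exist a $(2,3,n)$-AONT and a $(1,3,n)$-AONT.
   Context: Let $X$ be a finite alphabet with $|X|=v$ and $0\le t\le s$. A $(t,s,v)$-AONT is a bijection $\phi:X^s\to X^s$ such that for every $I\subseteq\{1,\dots,s\}$ with $|I|=t$ and every $J\subseteq\{1,\dots,s\}$ with $|J|=s-t$, the map $x\mapsto\big((x_i)_{i\in I},(\phi(x)_j)_{j\in J}\big)$ is a bijection $X^s\to X^t\times X^{s-t}$. *)

theory Defs
  imports "HOL-Library.FuncSet"
begin

text \<open>Words of length s over alphabet X: functions on the index set {0..<s}
  (positions 1..s of the paper shifted to 0..s-1), extensional outside.\<close>
definition words :: "'a set \<Rightarrow> nat \<Rightarrow> (nat \<Rightarrow> 'a) set" where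
  "words X s = PiE {..<s} (\<lambda>_. X)"

definition AONT :: "'a set \<Rightarrow> nat \<Rightarrow> nat \<Rightarrow> nat \<Rightarrow> ((nat \<Rightarrow> 'a) \<Rightarrow> (nat \<Rightarrow> 'a)) \<Rightarrow> bool" where
  "AONT X t s v \<phi> \<longleftrightarrow>
     finite X \<and> card X = v \<and> t \<le> s \<and>
     bij_betw \<phi> (words X s) (words X s) \<and>
     (\<forall>I J. I \<subseteq> {..<s} \<and> card I = t \<and> J \<subseteq> {..<s} \<and> card J = s - t \<longrightarrow>
        bij_betw (\<lambda>x. (restrict x I, restrict (\<phi> x) J))
                 (words X s) (PiE I (\<lambda>_. X) \<times> PiE J (\<lambda>_. X)))"

end

theory Submission
  imports Defs "HOL-Number_Theory.Cong"
begin

text \<open>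
  A pair of orthogonal Latin squares A, B of order n yields the map
  (x, y, z) \<mapsto> (A (A x y) z, A (B x y) z, B (A x y) z) on {..<n}^3. Every output coordinate is a
  composition of two Latin squares and hence injective in each input once the other two are
  fixed, which is the (2,3)-AONT property; bijectivity of the map comes from orthogonality.
  Inverting a (t,s)-AONT gives an (s-t,s)-AONT, so the (1,3)-AONT is the inverse map.

  Orthogonal Latin squares of every order n \<noteq> 2, 6 exist (Bose, Shrikhande and Parker), in the
  equivalent form of orthogonal arrays OA(4,n): linear arrays over the integers mod n for odd n,
  products for n = 4k, explicit squares of orders 4, 8, 10 and 14, and for the remaining
  n \<equiv> 2 (mod 4) Wilson's construction n = 3t + u from an OA(5,t) with t coprime to 6.
\<close>

lemma inj_on_card_imp_bij_betw:
  assumes "inj_on f A" "f ` A \<subseteq> B" "finite B" "card A = card B"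
  shows "bij_betw f A B"
  using assms card_subset_eq[OF assms(3,2)] by (simp add: bij_betw_def card_image)

section \<open>Orthogonal arrays\<close>

text \<open>An OA(4,n) is the same thing as a
  pair of orthogonal Latin squares of order n.\<close>

definition orthogonal_array :: "nat \<Rightarrow> nat \<Rightarrow> (nat \<Rightarrow> nat) set \<Rightarrow> bool" where
  "orthogonal_array k n R \<longleftrightarrow> R \<subseteq> (\<Pi>\<^sub>E j\<in>{..<k}. {..<n}) \<and>
     (\<forall>i<k. \<forall>j<k. i \<noteq> j \<longrightarrow> bij_betw (\<lambda>r. (r i, r j)) R ({..<n} \<times> {..<n}))"

lemma orthogonal_arrayI:
  assumes rows: "R \<subseteq> (\<Pi>\<^sub>E j\<in>{..<k}. {..<n})"
    and onto: "\<And>i j a b. i < j \<Longrightarrow> j < k \<Longrightarrow> a < n \<Longrightarrow> b < n \<Longrightarrow> \<exists>r\<in>R. r i = a \<and> r j = b"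
    and inj: "\<And>i j. i < j \<Longrightarrow> j < k \<Longrightarrow> inj_on (\<lambda>r. (r i, r j)) R"
  shows "orthogonal_array k n R"
  unfolding orthogonal_array_def
proof (intro conjI rows allI impI bij_betw_imageI)
  fix i j assume ij: "i < k" "j < k" "i \<noteq> j"
  then consider "i < j" | "j < i" by linarith
  then show "inj_on (\<lambda>r. (r i, r j)) R"
  proof cases
    case 1 with inj ij show ?thesis by blast
  next
    case 2 with inj[of j i] ij show ?thesis by (auto simp: inj_on_def)
  qed
  show "(\<lambda>r. (r i, r j)) ` R = {..<n} \<times> {..<n}"
  proof (intro equalityI subsetI)
    fix p assume "p \<in> (\<lambda>r. (r i, r j)) ` R"
    then obtain r where "r \<in> R" "p = (r i, r j)" by blast
    then show "p \<in> {..<n} \<times> {..<n}" using PiE_mem[OF subsetD[OF rows \<open>r \<in> R\<close>]] ij by auto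
  next
    fix p assume "p \<in> {..<n} \<times> {..<n}"
    then obtain a b where p: "p = (a, b)" "a < n" "b < n" by auto
    have "\<exists>r\<in>R. r i = a \<and> r j = b"
      using \<open>i \<noteq> j\<close> onto[of i j a b] onto[of j i b a] ij p by (metis linorder_neqE_nat)
    then show "p \<in> (\<lambda>r. (r i, r j)) ` R" using p by force
  qed
qed

lemma orthogonal_array_imageI:
  assumes P: "finite P" "card P = n\<^sup>2"
    and rows: "\<And>p. p \<in> P \<Longrightarrow> f p \<in> (\<Pi>\<^sub>E j\<in>{..<k}. {..<n})"
    and inj: "\<And>i j. i < j \<Longrightarrow> j < k \<Longrightarrow> inj_on (\<lambda>p. (f p i, f p j)) P"
  shows "orthogonal_array k n (f ` P)"
proof (rule orthogonal_arrayI)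
  show "f ` P \<subseteq> (\<Pi>\<^sub>E j\<in>{..<k}. {..<n})" using rows by blast
  fix i j assume ij: "i < j" "j < k"
  have "inj_on ((\<lambda>r. (r i, r j)) \<circ> f) P" using inj[OF ij] by (simp add: comp_def)
  then show "inj_on (\<lambda>r. (r i, r j)) (f ` P)" by (rule inj_on_imageI)
  have "f p i < n \<and> f p j < n" if "p \<in> P" for p
    using PiE_mem[OF rows[OF that]] ij by auto
  then have "(\<lambda>p. (f p i, f p j)) ` P \<subseteq> {..<n} \<times> {..<n}" by blast
  then have "bij_betw (\<lambda>p. (f p i, f p j)) P ({..<n} \<times> {..<n})"
    using inj[OF ij] P by (intro inj_on_card_imp_bij_betw) (auto simp: power2_eq_square)
  then have "(a, b) \<in> (\<lambda>p. (f p i, f p j)) ` P" if "a < n" "b < n" for a b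
    using that by (simp add: bij_betw_def)
  then show "\<exists>r\<in>f ` P. r i = a \<and> r j = b" if "a < n" "b < n" for a b
    using that by fastforce
qed

lemma orthogonal_array_row:
  "orthogonal_array k n R \<Longrightarrow> r \<in> R \<Longrightarrow> r \<in> (\<Pi>\<^sub>E j\<in>{..<k}. {..<n})"
  unfolding orthogonal_array_def by (elim conjE subsetD)

lemma orthogonal_array_entry:
  "orthogonal_array k n R \<Longrightarrow> r \<in> R \<Longrightarrow> j < k \<Longrightarrow> r j < n"
  using PiE_mem[OF orthogonal_array_row] by blast

lemma orthogonal_array_bij:
  "orthogonal_array k n R \<Longrightarrow> i < k \<Longrightarrow> j < k \<Longrightarrow> i \<noteq> j \<Longrightarrow>
    bij_betw (\<lambda>r. (r i, r j)) R ({..<n} \<times> {..<n})"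
  unfolding orthogonal_array_def by simp

lemma orthogonal_array_pair:
  assumes "orthogonal_array k n R" "i < k" "j < k" "i \<noteq> j" "a < n" "b < n"
  obtains r where "r \<in> R" "r i = a" "r j = b"
proof -
  have "(a, b) \<in> (\<lambda>r. (r i, r j)) ` R"
    using bij_betw_imp_surj_on[OF orthogonal_array_bij[OF assms(1-4)]] assms(5,6) by simp
  then show ?thesis using that by blast
qed

lemma orthogonal_array_row_eq:
  assumes "orthogonal_array k n R" "i < k" "j < k" "i \<noteq> j" "r \<in> R" "r' \<in> R"
    and "r i = r' i" "r j = r' j"
  shows "r = r'"
  using inj_onD[OF bij_betw_imp_inj_on[OF orthogonal_array_bij[OF assms(1-4)]]] assms(5-) by simp

section \<open>Latin squares\<close>

definition latin_square :: "nat \<Rightarrow> (nat \<Rightarrow> nat \<Rightarrow> nat) \<Rightarrow> bool" where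
  "latin_square n L \<longleftrightarrow> (\<forall>x<n. \<forall>y<n. L x y < n) \<and>
     (\<forall>x<n. inj_on (L x) {..<n}) \<and> (\<forall>y<n. inj_on (\<lambda>x. L x y) {..<n})"

definition orthogonal_latin_squares :: "nat \<Rightarrow> (nat \<Rightarrow> nat \<Rightarrow> nat) \<Rightarrow> (nat \<Rightarrow> nat \<Rightarrow> nat) \<Rightarrow> bool" where
  "orthogonal_latin_squares n A B \<longleftrightarrow> latin_square n A \<and> latin_square n B \<and>
     inj_on (\<lambda>(x, y). (A x y, B x y)) ({..<n} \<times> {..<n})"

lemma latin_square_entry: "latin_square n L \<Longrightarrow> x < n \<Longrightarrow> y < n \<Longrightarrow> L x y < n"
  unfolding latin_square_def by blast

lemma latin_square_cancel_right:
  "latin_square n L \<Longrightarrow> x < n \<Longrightarrow> y < n \<Longrightarrow> y' < n \<Longrightarrow> L x y = L x y' \<longleftrightarrow> y = y'"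
  unfolding latin_square_def inj_on_def by blast

lemma latin_square_cancel_left:
  "latin_square n L \<Longrightarrow> x < n \<Longrightarrow> x' < n \<Longrightarrow> y < n \<Longrightarrow> L x y = L x' y \<longleftrightarrow> x = x'"
  unfolding latin_square_def inj_on_def by blast

lemma orthogonal_latin_squares_cancel:
  assumes "orthogonal_latin_squares n A B" "x < n" "y < n" "x' < n" "y' < n"
    and "A x y = A x' y'" "B x y = B x' y'"
  shows "x = x' \<and> y = y'"
proof -
  have "inj_on (\<lambda>(x, y). (A x y, B x y)) ({..<n} \<times> {..<n})"
    using assms(1) by (simp add: orthogonal_latin_squares_def)
  then have "(x, y) = (x', y')" by (rule inj_onD) (use assms(2-) in auto)
  then show ?thesis by simp
qed

definition mols_row :: "(nat \<Rightarrow> nat \<Rightarrow> nat) \<Rightarrow> (nat \<Rightarrow> nat \<Rightarrow> nat) \<Rightarrow> nat \<times> nat \<Rightarrow> nat \<Rightarrow> nat" where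
  "mols_row A B = (\<lambda>(x, y). \<lambda>j\<in>{..<4}. [x, y, A x y, B x y] ! j)"

lemma less_4_cases:
  fixes j :: nat
  assumes "j < 4"
  obtains "j = 0" | "j = 1" | "j = 2" | "j = 3"
  using assms by linarith

lemma orthogonal_array_of_mols:
  assumes AB: "orthogonal_latin_squares n A B"
  shows "orthogonal_array 4 n (mols_row A B ` ({..<n} \<times> {..<n}))"
proof (rule orthogonal_array_imageI)
  have A: "latin_square n A" and B: "latin_square n B"
    using AB by (simp_all add: orthogonal_latin_squares_def)
  show "finite ({..<n} \<times> {..<n})" "card ({..<n} \<times> {..<n}) = n\<^sup>2"
    by (simp_all add: power2_eq_square)
  show "mols_row A B p \<in> (\<Pi>\<^sub>E j\<in>{..<4}. {..<n})" if "p \<in> {..<n} \<times> {..<n}" for p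
    using that latin_square_entry[OF A] latin_square_entry[OF B]
    by (clarsimp simp: mols_row_def) (auto elim!: less_4_cases)
  fix i j :: nat assume ij: "i < j" "j < 4"
  show "inj_on (\<lambda>p. (mols_row A B p i, mols_row A B p j)) ({..<n} \<times> {..<n})"
  proof (rule inj_onI, clarsimp)
    fix x y x' y' assume xy: "x < n" "y < n" "x' < n" "y' < n"
      and eq: "mols_row A B (x, y) i = mols_row A B (x', y') i"
        "mols_row A B (x, y) j = mols_row A B (x', y') j"
    have e: "[x, y, A x y, B x y] ! i = [x', y', A x' y', B x' y'] ! i"
      "[x, y, A x y, B x y] ! j = [x', y', A x' y', B x' y'] ! j"
      using eq ij by (simp_all add: mols_row_def)
    from ij consider "i = 0" "j = 1" | "i = 0" "j = 2" | "i = 0" "j = 3"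
      | "i = 1" "j = 2" | "i = 1" "j = 3" | "i = 2" "j = 3" by linarith
    then show "x = x' \<and> y = y'"
    proof cases
      case 1 then show ?thesis using e by simp
    next
      case 2 then show ?thesis using e xy latin_square_cancel_right[OF A, of x y y'] by auto
    next
      case 3 then show ?thesis using e xy latin_square_cancel_right[OF B, of x y y'] by auto
    next
      case 4 then show ?thesis using e xy latin_square_cancel_left[OF A, of x x' y] by auto
    next
      case 5 then show ?thesis using e xy latin_square_cancel_left[OF B, of x x' y] by auto
    next
      case 6 then show ?thesis using e orthogonal_latin_squares_cancel[OF AB xy] by simp
    qed
  qed
qed

lemma mols_of_orthogonal_array:
  assumes R: "orthogonal_array 4 n R"
  shows "\<exists>A B. orthogonal_latin_squares n A B"
proof -
  let ?S = "{..<n} \<times> {..<n}"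
  define g where "g = inv_into R (\<lambda>r. (r 0, r 1))"
  have bij01: "bij_betw (\<lambda>r. (r 0, r 1)) R ?S" using orthogonal_array_bij[OF R] by simp
  have g: "g (x, y) \<in> R" "g (x, y) 0 = x" "g (x, y) 1 = y" if "x < n" "y < n" for x y
    using bij_betw_inv_into_right[OF bij01] bij_betw_apply[OF bij_betw_inv_into[OF bij01]] that
    by (force simp: g_def)+
  have g_eq: "x = x' \<and> y = y'"
    if "x < n" "y < n" "x' < n" "y' < n" "i < 4" "j < 4" "i \<noteq> j"
      "g (x, y) i = g (x', y') i" "g (x, y) j = g (x', y') j" for x y x' y' i j
    using orthogonal_array_row_eq[OF R that(5-7) g(1)[OF that(1,2)] g(1)[OF that(3,4)] that(8,9)]
      g(2,3)[OF that(1,2)] g(2,3)[OF that(3,4)] by metis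
  have entry: "g (x, y) j < n" if "x < n" "y < n" "j < 4" for x y j
    using orthogonal_array_entry[OF R g(1)[OF that(1,2)] that(3)] .
  have latin: "latin_square n (\<lambda>x y. g (x, y) j)" if "j \<in> {2, 3}" for j
    unfolding latin_square_def
  proof (intro conjI allI impI inj_onI)
    show "g (x, y) j < n" if "x < n" "y < n" for x y using entry that \<open>j \<in> {2, 3}\<close> by auto
    show "y = y'" if "x < n" "y \<in> {..<n}" "y' \<in> {..<n}" "g (x, y) j = g (x, y') j" for x y y'
      using g_eq[of x y x y' 0 j] g(2) that \<open>j \<in> {2, 3}\<close> by auto
    show "x = x'" if "y < n" "x \<in> {..<n}" "x' \<in> {..<n}" "g (x, y) j = g (x', y) j" for x x' y
      using g_eq[of x y x' y 1 j] g(3) that \<open>j \<in> {2, 3}\<close> by auto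
  qed
  have "inj_on (\<lambda>(x, y). (g (x, y) 2, g (x, y) 3)) ?S"
    unfolding inj_on_def using g_eq[of _ _ _ _ 2 3] by auto
  then have "orthogonal_latin_squares n (\<lambda>x y. g (x, y) 2) (\<lambda>x y. g (x, y) 3)"
    unfolding orthogonal_latin_squares_def using latin by simp
  then show ?thesis by blast
qed

section \<open>Constructions of orthogonal arrays\<close>

definition linear_row :: "nat \<Rightarrow> nat \<Rightarrow> nat \<times> nat \<Rightarrow> nat \<Rightarrow> nat" where
  "linear_row k n = (\<lambda>(a, b). \<lambda>j\<in>{..<k}. if j < k - 1 then (j * a + b) mod n else a)"

lemma cong_linear_cancel:
  fixes a b a' b' i j n :: nat
  assumes "i < j" "coprime (j - i) n"
    and "[i * a + b = i * a' + b'] (mod n)" "[j * a + b = j * a' + b'] (mod n)"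
  shows "[a = a'] (mod n)"
proof -
  define d where "d = j - i"
  have "j = d + i" using assms(1) by (simp add: d_def)
  then have j: "j * x + y = d * x + (i * x + y)" for x y by (simp add: algebra_simps)
  have "[d * a + (i * a' + b') = d * a + (i * a + b)] (mod n)"
    using assms(3) by (simp add: cong_add_lcancel_nat cong_sym)
  also have "[d * a + (i * a + b) = d * a' + (i * a' + b')] (mod n)"
    using assms(4) by (simp add: j)
  finally have "[d * a = d * a'] (mod n)" by (simp add: cong_add_rcancel_nat)
  then show ?thesis using assms(2) by (simp add: d_def cong_mult_lcancel_nat)
qed

lemma orthogonal_array_linear:
  assumes n: "0 < n" and coprime: "\<And>d. 0 < d \<Longrightarrow> d < k - 1 \<Longrightarrow> coprime d n"
  shows "orthogonal_array k n (linear_row k n ` ({..<n} \<times> {..<n}))"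
proof (rule orthogonal_array_imageI)
  show "finite ({..<n} \<times> {..<n})" "card ({..<n} \<times> {..<n}) = n\<^sup>2"
    by (simp_all add: power2_eq_square)
  show "linear_row k n p \<in> (\<Pi>\<^sub>E j\<in>{..<k}. {..<n})" if "p \<in> {..<n} \<times> {..<n}" for p
    using that n by (clarsimp simp: linear_row_def)
  fix i j :: nat assume ij: "i < j" "j < k"
  show "inj_on (\<lambda>p. (linear_row k n p i, linear_row k n p j)) ({..<n} \<times> {..<n})"
  proof (rule inj_onI, clarsimp)
    fix a b a' b' assume ab: "a < n" "b < n" "a' < n" "b' < n"
      and eq: "linear_row k n (a, b) i = linear_row k n (a', b') i"
        "linear_row k n (a, b) j = linear_row k n (a', b') j"
    have "i < k - 1" using ij by linarith
    then have ci: "[i * a + b = i * a' + b'] (mod n)"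
      using eq(1) ij by (simp add: linear_row_def cong_def)
    have "a = a'"
    proof (cases "j < k - 1")
      case True
      then have "[j * a + b = j * a' + b'] (mod n)"
        using eq(2) ij by (simp add: linear_row_def cong_def)
      moreover have "coprime (j - i) n" using coprime[of "j - i"] ij True by simp
      ultimately have "[a = a'] (mod n)" using cong_linear_cancel[OF ij(1) _ ci] by blast
      then show ?thesis using ab by (simp add: cong_less_modulus_unique_nat)
    next
      case False
      then show ?thesis using eq(2) ij by (simp add: linear_row_def)
    qed
    with ci have "[b = b'] (mod n)" by (simp add: cong_add_lcancel_nat)
    then show "a = a' \<and> b = b'" using \<open>a = a'\<close> ab by (simp add: cong_less_modulus_unique_nat)
  qed
qed

lemma mult_add_eq_mult_add_iff:
  fixes x y x' y' m :: nat
  assumes "y < m" "y' < m"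
  shows "x * m + y = x' * m + y' \<longleftrightarrow> x = x' \<and> y = y'"
proof
  assume eq: "x * m + y = x' * m + y'"
  have "(x * m + y) div m = x" "(x * m + y) mod m = y"
    "(x' * m + y') div m = x'" "(x' * m + y') mod m = y'" using assms by simp_all
  then show "x = x' \<and> y = y'" using eq by metis
qed simp

definition product_row :: "nat \<Rightarrow> nat \<Rightarrow> (nat \<Rightarrow> nat) \<times> (nat \<Rightarrow> nat) \<Rightarrow> nat \<Rightarrow> nat" where
  "product_row k m = (\<lambda>(r, s). \<lambda>j\<in>{..<k}. r j * m + s j)"

lemma orthogonal_array_product:
  assumes R: "orthogonal_array k n R" and S: "orthogonal_array k m S"
  shows "orthogonal_array k (n * m) (product_row k m ` (R \<times> S))"
proof (rule orthogonal_arrayI)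
  have digits: "x * m + y < n * m" if "x < n" "y < m" for x y
  proof -
    have "(x + 1) * m \<le> n * m" using that(1) by (intro mult_le_mono1) simp
    then show ?thesis using that(2) by simp
  qed
  show "product_row k m ` (R \<times> S) \<subseteq> (\<Pi>\<^sub>E j\<in>{..<k}. {..<n * m})"
    using orthogonal_array_entry[OF R] orthogonal_array_entry[OF S] digits
    by (clarsimp simp: product_row_def)
  fix i j assume ij: "i < j" "j < k"
  show "\<exists>p\<in>product_row k m ` (R \<times> S). p i = a \<and> p j = b" if "a < n * m" "b < n * m" for a b
  proof -
    have m: "0 < m" using that by (cases m) auto
    have "a div m < n" "b div m < n" using that m by (simp_all add: div_less_iff_less_mult)
    then obtain r where r: "r \<in> R" "r i = a div m" "r j = b div m"
      using orthogonal_array_pair[OF R, of i j "a div m" "b div m"] ij by auto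
    obtain s where s: "s \<in> S" "s i = a mod m" "s j = b mod m"
      using orthogonal_array_pair[OF S, of i j "a mod m" "b mod m"] ij m by auto
    have "product_row k m (r, s) i = a" "product_row k m (r, s) j = b"
      using r s ij by (simp_all add: product_row_def)
    then show ?thesis using r(1) s(1) by blast
  qed
  show "inj_on (\<lambda>p. (p i, p j)) (product_row k m ` (R \<times> S))"
  proof (rule inj_onI, clarsimp)
    fix r s r' s' assume rs: "r \<in> R" "s \<in> S" "r' \<in> R" "s' \<in> S"
      and eq: "product_row k m (r, s) i = product_row k m (r', s') i"
        "product_row k m (r, s) j = product_row k m (r', s') j"
    have "r l = r' l \<and> s l = s' l" if "l \<in> {i, j}" for l
      using mult_add_eq_mult_add_iff[of "s l" m "s' l" "r l" "r' l"] eq that ij rs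
        orthogonal_array_entry[OF S, of s l] orthogonal_array_entry[OF S, of s' l]
      by (auto simp: product_row_def)
    then have "r = r'" "s = s'"
      using orthogonal_array_row_eq[OF R, of i j r r'] orthogonal_array_row_eq[OF S, of i j s s'] ij rs
      by auto
    then show "product_row k m (r, s) = product_row k m (r', s')" by simp
  qed
qed

text \<open>A symbol x < t of the OA(5,t) is split into
  the three symbols 3x, 3x + 1, 3x + 2, and u new symbols 3t, ..., 3t + u - 1 are added.  A row r
  with r 4 \<ge> u is inflated by the OA(4,3) on these copies; a row with r 4 < u is inflated by the
  OA(4,4) without its constant row, where the fourth symbol 3 stands for the new symbol 3t + r 4.
  The new symbols carry an OA(4,u).\<close>

definition inflated_row :: "nat \<Rightarrow> (nat \<Rightarrow> nat) \<Rightarrow> (nat \<Rightarrow> nat) \<Rightarrow> nat \<Rightarrow> nat" where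
  "inflated_row t r c = (\<lambda>j\<in>{..<4}. if c j = 3 then 3 * t + r 4 else 3 * r j + c j)"

definition shifted_row :: "nat \<Rightarrow> (nat \<Rightarrow> nat) \<Rightarrow> nat \<Rightarrow> nat" where
  "shifted_row t y = (\<lambda>j\<in>{..<4}. 3 * t + y j)"

locale wilson_construction =
  fixes t u :: nat and R5 Ru R3 R4 :: "(nat \<Rightarrow> nat) set"
  assumes R5: "orthogonal_array 5 t R5" and Ru: "orthogonal_array 4 u Ru" and u_le_t: "u \<le> t"
    and R3: "orthogonal_array 4 3 R3" and R4: "orthogonal_array 4 4 R4"
    and constant_row: "(\<lambda>j\<in>{..<4}. 3) \<in> R4"
begin

definition inflation :: "(nat \<Rightarrow> nat) \<Rightarrow> (nat \<Rightarrow> nat) set" where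
  "inflation r = (if r 4 < u then R4 - {\<lambda>j\<in>{..<4}. 3} else R3)"

definition rows :: "(nat \<Rightarrow> nat) set" where
  "rows = {inflated_row t r c | r c. r \<in> R5 \<and> c \<in> inflation r} \<union> shifted_row t ` Ru"

lemma inflation_entry:
  assumes "c \<in> inflation r" "j < 4"
  shows "c j < 3 \<or> c j = 3 \<and> r 4 < u"
  using assms orthogonal_array_entry[OF R3, of c j] orthogonal_array_entry[OF R4, of c j]
  by (auto simp: inflation_def split: if_splits)

lemma inflation_single_3:
  assumes "c \<in> inflation r" "i < 4" "j < 4" "i \<noteq> j" "c i = 3"
  shows "c j \<noteq> 3"
proof
  assume "c j = 3"
  have "c \<in> R4" "c \<noteq> (\<lambda>j\<in>{..<4}. 3)"
    using assms inflation_entry[OF assms(1,2)] by (auto simp: inflation_def split: if_splits)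
  moreover have "c = (\<lambda>j\<in>{..<4}. 3)"
    using orthogonal_array_row_eq[OF R4 assms(2-4) _ constant_row] \<open>c \<in> R4\<close> assms(2,3,5) \<open>c j = 3\<close>
    by simp
  ultimately show False by simp
qed

lemma inflation_row_eq:
  assumes "c \<in> inflation r" "c' \<in> inflation r" "i < 4" "j < 4" "i \<noteq> j"
    and "c i = c' i" "c j = c' j"
  shows "c = c'"
  using assms orthogonal_array_row_eq[OF R3 assms(3-5)] orthogonal_array_row_eq[OF R4 assms(3-5)]
  by (auto simp: inflation_def split: if_splits)

lemma inflation_pair:
  assumes "i < 4" "j < 4" "i \<noteq> j" "a < 3" "b < 3"
  obtains c where "c \<in> inflation r" "c i = a" "c j = b"
proof (cases "r 4 < u")
  case True
  obtain c where c: "c \<in> R4" "c i = a" "c j = b"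
    using orthogonal_array_pair[OF R4 assms(1-3), of a b] assms(4,5) by auto
  then have "c \<noteq> (\<lambda>j\<in>{..<4}. 3)" using assms(1,4) by auto
  with c True show ?thesis using that by (auto simp: inflation_def)
next
  case False
  then show ?thesis
    using orthogonal_array_pair[OF R3 assms] that by (auto simp: inflation_def)
qed

lemma inflated_row_entry:
  assumes "r \<in> R5" "c \<in> inflation r" "j < 4"
  shows "c j = 3 \<and> inflated_row t r c j = 3 * t + r 4 \<and> r 4 < u \<or>
    c j < 3 \<and> inflated_row t r c j = 3 * r j + c j \<and> inflated_row t r c j < 3 * t"
proof -
  have "r j < t" using orthogonal_array_entry[OF R5 assms(1)] assms(3) by simp
  then show ?thesis using inflation_entry[OF assms(2,3)] assms(3) by (auto simp: inflated_row_def)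
qed

lemma shifted_row_entry:
  assumes "y \<in> Ru" "j < 4"
  shows "3 * t \<le> shifted_row t y j" "shifted_row t y j < 3 * t + u"
  using assms orthogonal_array_entry[OF Ru assms] by (simp_all add: shifted_row_def)

lemma inflated_row_column_eq:
  assumes "r \<in> R5" "c \<in> inflation r" "r' \<in> R5" "c' \<in> inflation r'" "l < 4"
    and "inflated_row t r c l = inflated_row t r' c' l"
  shows "c l = c' l \<and> (c l = 3 \<longrightarrow> r 4 = r' 4) \<and> (c l \<noteq> 3 \<longrightarrow> r l = r' l)"
  using inflated_row_entry[OF assms(1,2,5)] inflated_row_entry[OF assms(3,4,5)] assms(6)
    mult_add_eq_mult_add_iff[of "c l" 3 "c' l" "r l" "r' l"]
  by (auto simp: mult.commute)

lemma inflated_row_eq: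
  assumes rc: "r \<in> R5" "c \<in> inflation r" "r' \<in> R5" "c' \<in> inflation r'"
    and ij: "i < 4" "j < 4" "i \<noteq> j"
    and eq: "inflated_row t r c i = inflated_row t r' c' i" "inflated_row t r c j = inflated_row t r' c' j"
  shows "r = r' \<and> c = c'"
proof -
  note col_i = inflated_row_column_eq[OF rc ij(1) eq(1)]
  note col_j = inflated_row_column_eq[OF rc ij(2) eq(2)]
  have "r = r'"
  proof (cases "c i = 3")
    case True
    then have "c j \<noteq> 3" using inflation_single_3[OF rc(2) ij] by blast
    then show ?thesis
      using orthogonal_array_row_eq[OF R5, of j 4 r r'] col_i col_j True ij rc by simp
  next
    case ci: False
    show ?thesis
    proof (cases "c j = 3")
      case True
      then show ?thesis
        using orthogonal_array_row_eq[OF R5, of i 4 r r'] col_i col_j ci ij rc by simp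
    next
      case False
      then show ?thesis
        using orthogonal_array_row_eq[OF R5, of i j r r'] col_i col_j ci ij rc by simp
    qed
  qed
  moreover have "c = c'"
    using inflation_row_eq[OF rc(2) _ ij] rc(4) \<open>r = r'\<close> col_i col_j by blast
  ultimately show ?thesis by blast
qed

lemma inflated_row_shifted_row_disagree:
  assumes rc: "r \<in> R5" "c \<in> inflation r" and y: "y \<in> Ru" and ij: "i < 4" "j < 4" "i \<noteq> j"
    and eq: "inflated_row t r c i = shifted_row t y i" "inflated_row t r c j = shifted_row t y j"
  shows False
proof -
  have "c i = 3" "c j = 3"
    using inflated_row_entry[OF rc ij(1)] inflated_row_entry[OF rc ij(2)]
      shifted_row_entry(1)[OF y ij(1)] shifted_row_entry(1)[OF y ij(2)] eq by auto
  then show False using inflation_single_3[OF rc(2) ij] by blast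
qed

lemma rows_entries: "rows \<subseteq> (\<Pi>\<^sub>E j\<in>{..<4}. {..<3 * t + u})"
proof
  fix \<rho> assume "\<rho> \<in> rows"
  then consider r c where "r \<in> R5" "c \<in> inflation r" "\<rho> = inflated_row t r c"
    | y where "y \<in> Ru" "\<rho> = shifted_row t y"
    unfolding rows_def by blast
  then show "\<rho> \<in> (\<Pi>\<^sub>E j\<in>{..<4}. {..<3 * t + u})"
  proof cases
    case 1
    have "inflated_row t r c j < 3 * t + u" if "j < 4" for j
      using inflated_row_entry[OF 1(1,2) that] by auto
    moreover have "inflated_row t r c \<in> extensional {..<4}" by (simp add: inflated_row_def)
    ultimately show ?thesis using 1(3) by (simp add: PiE_iff)
  next
    case 2
    have "shifted_row t y \<in> extensional {..<4}" by (simp add: shifted_row_def)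
    then show ?thesis using shifted_row_entry(2)[OF 2(1)] 2(2) by (simp add: PiE_iff)
  qed
qed

lemma rows_onto:
  assumes ij: "i < 4" "j < 4" "i \<noteq> j" and ab: "a < 3 * t + u" "b < 3 * t + u"
  shows "\<exists>\<rho>\<in>rows. \<rho> i = a \<and> \<rho> j = b"
proof -
  have inflated: "inflated_row t r c \<in> rows" if "r \<in> R5" "c \<in> inflation r" for r c
    using that by (auto simp: rows_def)
  have mixed: "\<exists>\<rho>\<in>rows. \<rho> i = a \<and> \<rho> j = b"
    if ij: "i < 4" "j < 4" "i \<noteq> j" and ab: "a < 3 * t" "3 * t \<le> b" "b < 3 * t + u" for i j a b
  proof -
    have "a div 3 < t" "b - 3 * t < t" using ab u_le_t by auto
    then obtain r where r: "r \<in> R5" "r i = a div 3" "r 4 = b - 3 * t"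
      using orthogonal_array_pair[OF R5, of i 4] ij by auto
    have "a mod 3 < 4" by linarith
    then obtain c where c: "c \<in> R4" "c i = a mod 3" "c j = 3"
      using orthogonal_array_pair[OF R4 ij, of "a mod 3" 3] by auto
    have "c \<noteq> (\<lambda>j\<in>{..<4}. 3)" using c(2) ij(1) by auto
    moreover have "r 4 < u" using r(3) ab by simp
    ultimately have "c \<in> inflation r" using c(1) by (simp add: inflation_def)
    moreover have "inflated_row t r c i = a" "inflated_row t r c j = b"
      using r c ij ab by (simp_all add: inflated_row_def)
    ultimately show ?thesis using inflated[OF r(1)] by blast
  qed
  consider "a < 3 * t" "b < 3 * t" | "a < 3 * t" "3 * t \<le> b" | "3 * t \<le> a" "b < 3 * t"
    | "3 * t \<le> a" "3 * t \<le> b" by linarith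
  then show ?thesis
  proof cases
    case 1
    then have "a div 3 < t" "b div 3 < t" by auto
    then obtain r where r: "r \<in> R5" "r i = a div 3" "r j = b div 3"
      using orthogonal_array_pair[OF R5, of i j] ij by auto
    obtain c where c: "c \<in> inflation r" "c i = a mod 3" "c j = b mod 3"
      using inflation_pair[OF ij, of "a mod 3" "b mod 3"] by auto
    have "a mod 3 \<noteq> 3" "b mod 3 \<noteq> 3" by linarith+
    then have "inflated_row t r c i = a" "inflated_row t r c j = b"
      using r c ij by (simp_all add: inflated_row_def)
    then show ?thesis using inflated[OF r(1) c(1)] by blast
  next
    case 2
    then show ?thesis using mixed[OF ij] ab by blast
  next
    case 3
    then show ?thesis using mixed[of j i b a] ij ab by blast
  next
    case 4
    have "a - 3 * t < u" "b - 3 * t < u" using ab 4 by linarith+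
    then obtain y where y: "y \<in> Ru" "y i = a - 3 * t" "y j = b - 3 * t"
      using orthogonal_array_pair[OF Ru ij] by blast
    then have "shifted_row t y i = a" "shifted_row t y j = b"
      using ij 4 by (simp_all add: shifted_row_def)
    then show ?thesis using y(1) by (auto simp: rows_def)
  qed
qed

lemma rows_inj:
  assumes ij: "i < 4" "j < 4" "i \<noteq> j"
  shows "inj_on (\<lambda>\<rho>. (\<rho> i, \<rho> j)) rows"
proof (rule inj_onI)
  fix \<rho> \<rho>' assume \<rho>: "\<rho> \<in> rows" "\<rho>' \<in> rows" and eq: "(\<rho> i, \<rho> j) = (\<rho>' i, \<rho>' j)"
  have shifted_eq: "y = y'"
    if "y \<in> Ru" "y' \<in> Ru" "shifted_row t y i = shifted_row t y' i"
      "shifted_row t y j = shifted_row t y' j" for y y'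
    using orthogonal_array_row_eq[OF Ru ij that(1,2)] that(3,4) ij by (simp add: shifted_row_def)
  show "\<rho> = \<rho>'"
    using \<rho> eq unfolding rows_def
    by (auto dest: inflated_row_eq[OF _ _ _ _ ij] shifted_eq
      inflated_row_shifted_row_disagree[OF _ _ _ ij] inflated_row_shifted_row_disagree[OF _ _ _ ij, OF _ _ _ sym sym])
qed

theorem orthogonal_array_rows: "orthogonal_array 4 (3 * t + u) rows"
  using rows_entries rows_onto rows_inj by (intro orthogonal_arrayI) auto

end

section \<open>Orthogonal Latin squares of every order except 2 and 6\<close>

definition orthogonal_tables :: "nat \<Rightarrow> nat list list \<Rightarrow> nat list list \<Rightarrow> bool" where
  "orthogonal_tables n T U \<longleftrightarrow>
     (\<forall>x\<in>set [0..<n]. \<forall>y\<in>set [0..<n]. T ! x ! y < n \<and> U ! x ! y < n) \<and>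
     (\<forall>x\<in>set [0..<n].
        distinct (map (\<lambda>y. T ! x ! y) [0..<n]) \<and> distinct (map (\<lambda>y. U ! x ! y) [0..<n])) \<and>
     (\<forall>y\<in>set [0..<n].
        distinct (map (\<lambda>x. T ! x ! y) [0..<n]) \<and> distinct (map (\<lambda>x. U ! x ! y) [0..<n])) \<and>
     distinct (map (\<lambda>(x, y). (T ! x ! y, U ! x ! y)) (List.product [0..<n] [0..<n]))"

lemma orthogonal_latin_squares_of_tables:
  assumes "orthogonal_tables n T U"
  shows "orthogonal_latin_squares n (\<lambda>x y. T ! x ! y) (\<lambda>x y. U ! x ! y)"
proof -
  have "set [0..<n] = {..<n}" "set (List.product [0..<n] [0..<n]) = {..<n} \<times> {..<n}" by auto
  with assms show ?thesis
    unfolding orthogonal_tables_def orthogonal_latin_squares_def latin_square_def distinct_map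
    by auto
qed

definition mols_4_A :: "nat list list" where
  "mols_4_A =
     [[0, 3, 1, 2],
      [2, 1, 3, 0],
      [3, 0, 2, 1],
      [1, 2, 0, 3]]"

definition mols_4_B :: "nat list list" where
  "mols_4_B =
     [[0, 2, 3, 1],
      [3, 1, 0, 2],
      [1, 3, 2, 0],
      [2, 0, 1, 3]]"

lemma orthogonal_tables_4: "orthogonal_tables 4 mols_4_A mols_4_B"
  by code_simp

definition mols_8_A :: "nat list list" where
  "mols_8_A =
     [[0, 3, 6, 5, 7, 4, 1, 2],
      [2, 1, 4, 7, 5, 6, 3, 0],
      [4, 7, 2, 1, 3, 0, 5, 6],
      [6, 5, 0, 3, 1, 2, 7, 4],
      [3, 0, 5, 6, 4, 7, 2, 1],
      [1, 2, 7, 4, 6, 5, 0, 3],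
      [7, 4, 1, 2, 0, 3, 6, 5],
      [5, 6, 3, 0, 2, 1, 4, 7]]"

definition mols_8_B :: "nat list list" where
  "mols_8_B =
     [[0, 2, 4, 6, 3, 1, 7, 5],
      [3, 1, 7, 5, 0, 2, 4, 6],
      [6, 4, 2, 0, 5, 7, 1, 3],
      [5, 7, 1, 3, 6, 4, 2, 0],
      [7, 5, 3, 1, 4, 6, 0, 2],
      [4, 6, 0, 2, 7, 5, 3, 1],
      [1, 3, 5, 7, 2, 0, 6, 4],
      [2, 0, 6, 4, 1, 3, 5, 7]]"

lemma orthogonal_tables_8: "orthogonal_tables 8 mols_8_A mols_8_B"
  by code_simp

definition mols_10_A :: "nat list list" where
  "mols_10_A =
     [[9, 3, 6, 4, 7, 8, 5, 2, 1, 0],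
      [6, 9, 4, 0, 5, 7, 8, 3, 2, 1],
      [8, 0, 9, 5, 1, 6, 7, 4, 3, 2],
      [7, 8, 1, 9, 6, 2, 0, 5, 4, 3],
      [1, 7, 8, 2, 9, 0, 3, 6, 5, 4],
      [4, 2, 7, 8, 3, 9, 1, 0, 6, 5],
      [2, 5, 3, 7, 8, 4, 9, 1, 0, 6],
      [3, 4, 5, 6, 0, 1, 2, 9, 8, 7],
      [0, 1, 2, 3, 4, 5, 6, 8, 7, 9],
      [5, 6, 0, 1, 2, 3, 4, 7, 9, 8]]"

definition mols_10_B :: "nat list list" where
  "mols_10_B =
     [[3, 1, 9, 7, 5, 0, 8, 2, 4, 6],
      [8, 4, 2, 9, 7, 6, 1, 3, 5, 0],
      [2, 8, 5, 3, 9, 7, 0, 4, 6, 1],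
      [1, 3, 8, 6, 4, 9, 7, 5, 0, 2],
      [7, 2, 4, 8, 0, 5, 9, 6, 1, 3],
      [9, 7, 3, 5, 8, 1, 6, 0, 2, 4],
      [0, 9, 7, 4, 6, 8, 2, 1, 3, 5],
      [5, 6, 0, 1, 2, 3, 4, 9, 7, 8],
      [4, 5, 6, 0, 1, 2, 3, 8, 9, 7],
      [6, 0, 1, 2, 3, 4, 5, 7, 8, 9]]"

lemma orthogonal_tables_10: "orthogonal_tables 10 mols_10_A mols_10_B"
  by code_simp

definition mols_14_A :: "nat list list" where
  "mols_14_A =
     [[12, 10, 11, 0, 7, 1, 8, 13, 2, 4, 9, 5, 6, 3],
      [10, 12, 0, 11, 1, 8, 2, 9, 13, 3, 5, 6, 7, 4],
      [6, 0, 12, 1, 11, 2, 9, 3, 10, 13, 4, 7, 8, 5],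
      [5, 7, 1, 12, 2, 11, 3, 10, 4, 0, 13, 8, 9, 6],
      [13, 6, 8, 2, 12, 3, 11, 4, 0, 5, 1, 9, 10, 7],
      [2, 13, 7, 9, 3, 12, 4, 11, 5, 1, 6, 10, 0, 8],
      [7, 3, 13, 8, 10, 4, 12, 5, 11, 6, 2, 0, 1, 9],
      [3, 8, 4, 13, 9, 0, 5, 12, 6, 11, 7, 1, 2, 10],
      [8, 4, 9, 5, 13, 10, 1, 6, 12, 7, 11, 2, 3, 0],
      [11, 9, 5, 10, 6, 13, 0, 2, 7, 12, 8, 3, 4, 1],
      [9, 11, 10, 6, 0, 7, 13, 1, 3, 8, 12, 4, 5, 2],
      [0, 1, 2, 3, 4, 5, 6, 7, 8, 9, 10, 12, 13, 11],
      [4, 5, 6, 7, 8, 9, 10, 0, 1, 2, 3, 11, 12, 13],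
      [1, 2, 3, 4, 5, 6, 7, 8, 9, 10, 0, 13, 11, 12]]"

definition mols_14_B :: "nat list list" where
  "mols_14_B =
     [[4, 1, 7, 12, 0, 2, 8, 5, 9, 13, 11, 10, 3, 6],
      [11, 5, 2, 8, 12, 1, 3, 9, 6, 10, 13, 0, 4, 7],
      [13, 11, 6, 3, 9, 12, 2, 4, 10, 7, 0, 1, 5, 8],
      [1, 13, 11, 7, 4, 10, 12, 3, 5, 0, 8, 2, 6, 9],
      [9, 2, 13, 11, 8, 5, 0, 12, 4, 6, 1, 3, 7, 10],
      [2, 10, 3, 13, 11, 9, 6, 1, 12, 5, 7, 4, 8, 0],
      [8, 3, 0, 4, 13, 11, 10, 7, 2, 12, 6, 5, 9, 1],
      [7, 9, 4, 1, 5, 13, 11, 0, 8, 3, 12, 6, 10, 2],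
      [12, 8, 10, 5, 2, 6, 13, 11, 1, 9, 4, 7, 0, 3],
      [5, 12, 9, 0, 6, 3, 7, 13, 11, 2, 10, 8, 1, 4],
      [0, 6, 12, 10, 1, 7, 4, 8, 13, 11, 3, 9, 2, 5],
      [6, 7, 8, 9, 10, 0, 1, 2, 3, 4, 5, 11, 13, 12],
      [3, 4, 5, 6, 7, 8, 9, 10, 0, 1, 2, 13, 12, 11],
      [10, 0, 1, 2, 3, 4, 5, 6, 7, 8, 9, 12, 11, 13]]"

lemma orthogonal_tables_14: "orthogonal_tables 14 mols_14_A mols_14_B"
  by code_simp

lemma orthogonal_array_4_odd:
  assumes "odd n"
  shows "orthogonal_array 4 n (linear_row 4 n ` ({..<n} \<times> {..<n}))"
proof (rule orthogonal_array_linear)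
  show "0 < n" using assms by (rule odd_pos)
  fix d :: nat assume "0 < d" "d < 4 - 1"
  then have "d = 1 \<or> d = 2" by auto
  then show "coprime d n" using assms by auto
qed

lemma orthogonal_array_5_coprime_6:
  assumes "odd t" "\<not> 3 dvd t"
  shows "orthogonal_array 5 t (linear_row 5 t ` ({..<t} \<times> {..<t}))"
proof (rule orthogonal_array_linear)
  show "0 < t" using assms(1) by (rule odd_pos)
  fix d :: nat assume "0 < d" "d < 5 - 1"
  then have "d = 1 \<or> d = 2 \<or> d = 3" by auto
  moreover have "coprime 3 t" using assms(2) by (intro prime_imp_coprime) auto
  ultimately show "coprime d t" using assms(1) by auto
qed

lemma orthogonal_array_4_table:
  assumes "orthogonal_tables n T U"
  shows "orthogonal_array 4 n (mols_row (\<lambda>x y. T ! x ! y) (\<lambda>x y. U ! x ! y) ` ({..<n} \<times> {..<n}))"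
  using orthogonal_array_of_mols[OF orthogonal_latin_squares_of_tables[OF assms]] .

lemma orthogonal_array_4_4_constant_row:
  "\<exists>R. orthogonal_array 4 4 R \<and> (\<lambda>j\<in>{..<4}. 3) \<in> R"
proof (intro exI conjI)
  let ?A = "\<lambda>x y. mols_4_A ! x ! y" and ?B = "\<lambda>x y. mols_4_B ! x ! y"
  show "orthogonal_array 4 4 (mols_row ?A ?B ` ({..<4} \<times> {..<4}))"
    by (rule orthogonal_array_4_table[OF orthogonal_tables_4])
  have "(\<lambda>j\<in>{..<4}. 3) = mols_row ?A ?B (3, 3)"
    unfolding mols_row_def mols_4_A_def mols_4_B_def
    by (auto intro!: restrict_ext elim!: less_4_cases)
  then show "(\<lambda>j\<in>{..<4}. 3) \<in> mols_row ?A ?B ` ({..<4} \<times> {..<4})" by simp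
qed

lemma wilson_parameter_exists:
  fixes n :: nat
  assumes "n mod 4 = 2" "18 \<le> n" "n \<noteq> 30"
  shows "\<exists>t. odd t \<and> \<not> 3 dvd t \<and> 3 * t < n \<and> n \<le> 4 * t"
proof -
  have coprime_6: "odd (6 * q + r) \<and> \<not> 3 dvd (6 * q + r)" if "r \<in> {1, 5, 7}" for q r :: nat
    using that unfolding insert_iff empty_iff by presburger
  define q where "q = n div 24"
  have nq: "n = 24 * q + n mod 24" by (simp add: q_def)
  have "n mod 24 \<in> {2, 6, 10, 14, 18, 22}"
    unfolding insert_iff empty_iff using assms(1) by presburger
  then consider "n mod 24 = 2" "1 \<le> q" | "n mod 24 = 6" "2 \<le> q" | "n mod 24 \<in> {10, 14}" "1 \<le> q"
    | "n mod 24 = 18" | "n mod 24 = 22"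
    using assms(2,3) nq by fastforce
  then show ?thesis
  proof cases
    case 1
    then show ?thesis using nq coprime_6[of 1 q] by (intro exI[of _ "6 * q + 1"]) simp
  next
    case 2
    then show ?thesis using nq coprime_6[of 5 q] by (intro exI[of _ "6 * q + 5"]) simp
  next
    case 3
    then show ?thesis using nq coprime_6[of 5 q] by (intro exI[of _ "6 * q + 5"]) auto
  next
    case 4
    then show ?thesis using nq coprime_6[of 5 q] by (intro exI[of _ "6 * q + 5"]) simp
  next
    case 5
    then show ?thesis using nq coprime_6[of 7 q] by (intro exI[of _ "6 * q + 7"]) simp
  qed
qed

lemma orthogonal_array_4_wilson:
  assumes "n mod 4 = 2" "18 \<le> n" "n \<noteq> 30"
  shows "\<exists>R. orthogonal_array 4 n R"
proof -
  obtain t where t: "odd t" "\<not> 3 dvd t" "3 * t < n" "n \<le> 4 * t"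
    using wilson_parameter_exists[OF assms] by blast
  define u where "u = n - 3 * t"
  have u: "u \<le> t" "n = 3 * t + u" using t(3,4) by (simp_all add: u_def)
  have "even n" using assms(1) by presburger
  then have "odd u" using u(2) t(1) by simp
  obtain R4 where R4: "orthogonal_array 4 4 R4" "(\<lambda>j\<in>{..<4}. 3) \<in> R4"
    using orthogonal_array_4_4_constant_row by blast
  interpret wilson_construction t u "linear_row 5 t ` ({..<t} \<times> {..<t})"
    "linear_row 4 u ` ({..<u} \<times> {..<u})" "linear_row 4 3 ` ({..<3} \<times> {..<3})" R4
    using orthogonal_array_5_coprime_6[OF t(1,2)] orthogonal_array_4_odd[OF \<open>odd u\<close>]
      orthogonal_array_4_odd[of 3] u(1) R4 by unfold_locales simp_all
  show ?thesis using orthogonal_array_rows u(2) by auto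
qed

theorem orthogonal_array_4_exists:
  assumes "0 < n" "n \<noteq> 2" "n \<noteq> 6"
  shows "\<exists>R. orthogonal_array 4 n R"
  using assms
proof (induction n rule: less_induct)
  case (less n)
  note table = orthogonal_array_4_table[OF orthogonal_tables_4] orthogonal_array_4_table[OF orthogonal_tables_8]
    orthogonal_array_4_table[OF orthogonal_tables_10] orthogonal_array_4_table[OF orthogonal_tables_14]
  have three: "orthogonal_array 4 3 (linear_row 4 3 ` ({..<3} \<times> {..<3}))"
    by (rule orthogonal_array_4_odd) simp
  note product = orthogonal_array_product[OF table(2) three] orthogonal_array_product[OF table(3) three]
  have "odd n \<or> n \<in> {4, 8, 10, 14, 24, 30} \<or> n mod 4 = 0 \<and> n \<notin> {4, 8, 24} \<or>
      n mod 4 = 2 \<and> 18 \<le> n \<and> n \<noteq> 30"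
    using less.prems unfolding insert_iff empty_iff by presburger
  then consider "odd n" | "n \<in> {4, 8, 10, 14, 24, 30}" | "n mod 4 = 0" "n \<notin> {4, 8, 24}"
    | "n mod 4 = 2" "18 \<le> n" "n \<noteq> 30"
    by meson
  then show ?case
  proof cases
    case 1
    then show ?thesis using orthogonal_array_4_odd by blast
  next
    case 2
    then show ?thesis using table product by auto
  next
    case 3
    define k where "k = n div 4"
    have n: "n = 4 * k" using 3(1) unfolding k_def by presburger
    then have "0 < k" "k < n" "k \<noteq> 2" "k \<noteq> 6" using 3(2) less.prems(1) by auto
    then obtain R where "orthogonal_array 4 k R" using less.IH by blast
    then show ?thesis using orthogonal_array_product[OF table(1)] n by blast
  next
    case 4
    then show ?thesis by (rule orthogonal_array_4_wilson)
  qed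
qed

section \<open>All-or-nothing transforms\<close>

lemma AONT_complement:
  assumes "AONT X t s v \<phi>"
  shows "AONT X (s - t) s v (inv_into (words X s) \<phi>)"
proof -
  let ?W = "words X s" and ?\<psi> = "inv_into (words X s) \<phi>"
  have fin: "finite X" "card X = v" "t \<le> s" and bij: "bij_betw \<phi> ?W ?W"
    and split: "\<And>I J. I \<subseteq> {..<s} \<Longrightarrow> card I = t \<Longrightarrow> J \<subseteq> {..<s} \<Longrightarrow> card J = s - t \<Longrightarrow>
        bij_betw (\<lambda>x. (restrict x I, restrict (\<phi> x) J)) ?W ((\<Pi>\<^sub>E i\<in>I. X) \<times> (\<Pi>\<^sub>E j\<in>J. X))"
    using assms unfolding AONT_def by blast+
  have bij_inv: "bij_betw ?\<psi> ?W ?W" using bij_betw_inv_into[OF bij] .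
  have "bij_betw (\<lambda>y. (restrict y I, restrict (?\<psi> y) J)) ?W ((\<Pi>\<^sub>E i\<in>I. X) \<times> (\<Pi>\<^sub>E j\<in>J. X))"
    if IJ: "I \<subseteq> {..<s}" "card I = s - t" "J \<subseteq> {..<s}" "card J = s - (s - t)" for I J
  proof -
    have "card J = t" using IJ(4) fin(3) by simp
    then have "bij_betw (\<lambda>x. (restrict x J, restrict (\<phi> x) I)) ?W ((\<Pi>\<^sub>E j\<in>J. X) \<times> (\<Pi>\<^sub>E i\<in>I. X))"
      using split[OF IJ(3) _ IJ(1,2)] by blast
    moreover have "bij_betw prod.swap ((\<Pi>\<^sub>E j\<in>J. X) \<times> (\<Pi>\<^sub>E i\<in>I. X)) ((\<Pi>\<^sub>E i\<in>I. X) \<times> (\<Pi>\<^sub>E j\<in>J. X))"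
      by (rule bij_betwI[where g = prod.swap]) auto
    ultimately have "bij_betw (prod.swap \<circ> (\<lambda>x. (restrict x J, restrict (\<phi> x) I)) \<circ> ?\<psi>) ?W
        ((\<Pi>\<^sub>E i\<in>I. X) \<times> (\<Pi>\<^sub>E j\<in>J. X))"
      by (intro bij_betw_trans[OF bij_inv] bij_betw_trans)
    then show ?thesis
    proof (rule bij_betw_cong[THEN iffD1, rotated])
      fix y assume "y \<in> ?W"
      then show "(prod.swap \<circ> (\<lambda>x. (restrict x J, restrict (\<phi> x) I)) \<circ> ?\<psi>) y =
          (restrict y I, restrict (?\<psi> y) J)"
        using bij_betw_inv_into_right[OF bij] by simp
    qed
  qed
  then show ?thesis unfolding AONT_def using fin bij_inv by auto
qed

lemma AONT_s_minus_1I: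
  assumes X: "finite X" and s: "0 < s" and bij: "bij_betw \<phi> (words X s) (words X s)"
    and coordinate_inj: "\<And>x x' i j. x \<in> words X s \<Longrightarrow> x' \<in> words X s \<Longrightarrow> i < s \<Longrightarrow> j < s \<Longrightarrow>
      (\<And>l. l < s \<Longrightarrow> l \<noteq> i \<Longrightarrow> x l = x' l) \<Longrightarrow> \<phi> x j = \<phi> x' j \<Longrightarrow> x i = x' i"
  shows "AONT X (s - 1) s (card X) \<phi>"
  unfolding AONT_def
proof (intro conjI X refl bij allI impI diff_le_self)
  fix I J assume IJ: "I \<subseteq> {..<s} \<and> card I = s - 1 \<and> J \<subseteq> {..<s} \<and> card J = s - (s - 1)"
  have fin: "finite I" "finite J" using IJ finite_subset by blast+
  have "card ({..<s} - I) = s - (s - 1)" using IJ fin by (simp add: card_Diff_subset)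
  then have "card ({..<s} - I) = 1" using s by simp
  then obtain i where i: "{..<s} - I = {i}" by (auto simp: card_Suc_eq)
  have "card J = 1" using IJ s by simp
  then obtain j where j: "J = {j}" by (auto simp: card_Suc_eq)
  show "bij_betw (\<lambda>x. (restrict x I, restrict (\<phi> x) J)) (words X s) ((\<Pi>\<^sub>E i\<in>I. X) \<times> (\<Pi>\<^sub>E j\<in>J. X))"
  proof (rule inj_on_card_imp_bij_betw)
    show "inj_on (\<lambda>x. (restrict x I, restrict (\<phi> x) J)) (words X s)"
    proof (rule inj_onI)
      fix x x' assume xx: "x \<in> words X s" "x' \<in> words X s"
        and eq: "(restrict x I, restrict (\<phi> x) J) = (restrict x' I, restrict (\<phi> x') J)"
      have rI: "restrict x I = restrict x' I" and rJ: "restrict (\<phi> x) J = restrict (\<phi> x') J"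
        using eq by simp_all
      have off_i: "x l = x' l" if "l < s" "l \<noteq> i" for l
      proof -
        have "l \<in> I" using i that by blast
        then show ?thesis using fun_cong[OF rI, of l] by simp
      qed
      have "i < s" "j < s" using i j IJ by auto
      moreover have "\<phi> x j = \<phi> x' j" using fun_cong[OF rJ, of j] j by simp
      ultimately have "x i = x' i" using coordinate_inj[OF xx _ _ off_i] by blast
      with off_i show "x = x'" using xx unfolding words_def by (metis PiE_ext lessThan_iff)
    qed
    show "(\<lambda>x. (restrict x I, restrict (\<phi> x) J)) ` words X s \<subseteq> (\<Pi>\<^sub>E i\<in>I. X) \<times> (\<Pi>\<^sub>E j\<in>J. X)"
      using bij_betw_apply[OF bij] IJ unfolding words_def by (fastforce simp: PiE_iff)
    show "finite ((\<Pi>\<^sub>E i\<in>I. X) \<times> (\<Pi>\<^sub>E j\<in>J. X))" using fin X by (simp add: finite_PiE)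
    have "card X ^ s = card X ^ (s - 1) * card X" using s by (metis Suc_diff_1 power_Suc2)
    then show "card (words X s) = card ((\<Pi>\<^sub>E i\<in>I. X) \<times> (\<Pi>\<^sub>E j\<in>J. X))"
      using fin IJ \<open>card J = 1\<close> by (simp add: words_def card_PiE card_cartesian_product)
  qed
qed

lemma latin_square_compose_cancel:
  assumes L: "latin_square n L" and M: "latin_square n M"
    and "x < n" "y < n" "z < n" "x' < n" "y' < n" "z' < n"
    and eq: "L (M x y) z = L (M x' y') z'"
    and two: "x = x' \<and> y = y' \<or> x = x' \<and> z = z' \<or> y = y' \<and> z = z'"
  shows "x = x' \<and> y = y' \<and> z = z'"
  using two
proof (elim disjE conjE)
  assume "x = x'" "y = y'"
  then show ?thesis using eq assms(3-8) latin_square_entry[OF M] latin_square_cancel_right[OF L] by simp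
next
  assume "x = x'" "z = z'"
  then have "M x y = M x y'"
    using eq assms(3-8) latin_square_entry[OF M] latin_square_cancel_left[OF L] by simp
  then show ?thesis using \<open>x = x'\<close> \<open>z = z'\<close> assms(3-8) latin_square_cancel_right[OF M] by simp
next
  assume "y = y'" "z = z'"
  then have "M x y = M x' y"
    using eq assms(3-8) latin_square_entry[OF M] latin_square_cancel_left[OF L] by simp
  then show ?thesis using \<open>y = y'\<close> \<open>z = z'\<close> assms(3-8) latin_square_cancel_left[OF M] by simp
qed

definition aont_map :: "(nat \<Rightarrow> nat \<Rightarrow> nat) \<Rightarrow> (nat \<Rightarrow> nat \<Rightarrow> nat) \<Rightarrow> (nat \<Rightarrow> nat) \<Rightarrow> nat \<Rightarrow> nat" where
  "aont_map A B x = (\<lambda>j\<in>{..<3}.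
     [A (A (x 0) (x 1)) (x 2), A (B (x 0) (x 1)) (x 2), B (A (x 0) (x 1)) (x 2)] ! j)"

lemma words_3_iff: "x \<in> words {..<n} 3 \<longleftrightarrow> x \<in> extensional {..<3} \<and> x 0 < n \<and> x 1 < n \<and> x 2 < n"
proof -
  have "{..<3} = {0, 1, 2 :: nat}" by auto
  then show ?thesis by (auto simp: words_def PiE_iff)
qed

lemma less_3_cases:
  fixes i :: nat
  assumes "i < 3"
  obtains "i = 0" | "i = 1" | "i = 2"
  using assms by linarith

lemma words_3_eqI:
  assumes "x \<in> words X 3" "x' \<in> words X 3" "x 0 = x' 0" "x 1 = x' 1" "x 2 = x' 2"
  shows "x = x'"
  using assms(1,2) unfolding words_def
proof (rule PiE_ext)
  fix i :: nat assume "i \<in> {..<3}"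
  then show "x i = x' i" using assms(3-5) by (auto elim: less_3_cases)
qed

lemma aont_map_words:
  assumes "latin_square n A" "latin_square n B" "x \<in> words {..<n} 3"
  shows "aont_map A B x \<in> words {..<n} 3"
  using assms latin_square_entry[OF assms(1)] latin_square_entry[OF assms(2)]
  by (simp add: words_3_iff aont_map_def)

lemma bij_betw_aont_map:
  assumes AB: "orthogonal_latin_squares n A B"
  shows "bij_betw (aont_map A B) (words {..<n} 3) (words {..<n} 3)"
proof -
  let ?W = "words {..<n} 3"
  have A: "latin_square n A" and B: "latin_square n B"
    using AB by (simp_all add: orthogonal_latin_squares_def)
  note entries = latin_square_entry[OF A] latin_square_entry[OF B]
  have "inj_on (aont_map A B) ?W"
  proof (rule inj_onI)
    fix x x' assume xx: "x \<in> ?W" "x' \<in> ?W" and eq: "aont_map A B x = aont_map A B x'"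
    have x: "x 0 < n" "x 1 < n" "x 2 < n" "x' 0 < n" "x' 1 < n" "x' 2 < n"
      using xx by (simp_all add: words_3_iff)
    have out: "A (A (x 0) (x 1)) (x 2) = A (A (x' 0) (x' 1)) (x' 2)"
      "A (B (x 0) (x 1)) (x 2) = A (B (x' 0) (x' 1)) (x' 2)"
      "B (A (x 0) (x 1)) (x 2) = B (A (x' 0) (x' 1)) (x' 2)"
      using fun_cong[OF eq, of 0] fun_cong[OF eq, of 1] fun_cong[OF eq, of 2]
      by (simp_all add: aont_map_def)
    have "A (x 0) (x 1) = A (x' 0) (x' 1)" "x 2 = x' 2"
      using orthogonal_latin_squares_cancel[OF AB _ _ _ _ out(1,3)] x entries by auto
    moreover from this have "B (x 0) (x 1) = B (x' 0) (x' 1)"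
      using out(2) x entries latin_square_cancel_left[OF A] by simp
    ultimately show "x = x'"
      using orthogonal_latin_squares_cancel[OF AB] x words_3_eqI[OF xx] by metis
  qed
  moreover have "aont_map A B ` ?W \<subseteq> ?W" using aont_map_words[OF A B] by blast
  moreover have "finite ?W" by (simp add: words_def finite_PiE)
  ultimately show ?thesis by (simp add: bij_betw_def endo_inj_surj)
qed

lemma aont_map_coordinate_inj:
  assumes A: "latin_square n A" and B: "latin_square n B"
    and xx: "x \<in> words {..<n} 3" "x' \<in> words {..<n} 3" and ij: "i < 3" "j < 3"
    and off_i: "\<And>l. l < 3 \<Longrightarrow> l \<noteq> i \<Longrightarrow> x l = x' l"
    and eq: "aont_map A B x j = aont_map A B x' j"
  shows "x i = x' i"
proof -
  have x: "x 0 < n" "x 1 < n" "x 2 < n" "x' 0 < n" "x' 1 < n" "x' 2 < n"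
    using xx by (simp_all add: words_3_iff)
  have two: "x 0 = x' 0 \<and> x 1 = x' 1 \<or> x 0 = x' 0 \<and> x 2 = x' 2 \<or> x 1 = x' 1 \<and> x 2 = x' 2"
    using ij(1) off_i[of 0] off_i[of 1] off_i[of 2] by (cases rule: less_3_cases) auto
  from ij(2) have all: "x 0 = x' 0 \<and> x 1 = x' 1 \<and> x 2 = x' 2"
  proof (cases rule: less_3_cases)
    case 1
    then show ?thesis using eq latin_square_compose_cancel[OF A A x _ two] by (simp add: aont_map_def)
  next
    case 2
    then show ?thesis using eq latin_square_compose_cancel[OF A B x _ two] by (simp add: aont_map_def)
  next
    case 3
    then show ?thesis using eq latin_square_compose_cancel[OF B A x _ two] by (simp add: aont_map_def)
  qed
  from ij(1) show "x i = x' i" by (cases rule: less_3_cases) (use all in auto)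
qed

lemma AONT_2_3_of_mols:
  assumes AB: "orthogonal_latin_squares n A B"
  shows "AONT {..<n} 2 3 n (aont_map A B)"
proof -
  have A: "latin_square n A" and B: "latin_square n B"
    using AB by (simp_all add: orthogonal_latin_squares_def)
  have "AONT {..<n} (3 - 1) 3 (card {..<n}) (aont_map A B)"
  proof (rule AONT_s_minus_1I[OF _ _ bij_betw_aont_map[OF AB]])
    fix x x' i j
    assume "x \<in> words {..<n} 3" "x' \<in> words {..<n} 3" "i < 3" "j < 3"
      "\<And>l. l < 3 \<Longrightarrow> l \<noteq> i \<Longrightarrow> x l = x' l" "aont_map A B x j = aont_map A B x' j"
    then show "x i = x' i" by (rule aont_map_coordinate_inj[OF A B])
  qed simp_all
  then show ?thesis by simp
qed

theorem corollary3p8: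
  fixes n :: nat
  assumes "n > 0" and "n \<noteq> 2" and "n \<noteq> 6"
  shows "(\<exists>(X :: nat set) \<phi>. AONT X 2 3 n \<phi>) \<and> (\<exists>(X :: nat set) \<phi>. AONT X 1 3 n \<phi>)"
proof -
  obtain R where "orthogonal_array 4 n R" using orthogonal_array_4_exists assms by blast
  then obtain A B where "orthogonal_latin_squares n A B" using mols_of_orthogonal_array by blast
  then have two: "AONT {..<n} 2 3 n (aont_map A B)" by (rule AONT_2_3_of_mols)
  then have "AONT {..<n} 1 3 n (inv_into (words {..<n} 3) (aont_map A B))"
    using AONT_complement[OF two] by simp
  with two show ?thesis by blast
qed

end
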